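(* Let $\gamma\in(0,1)$, and let $\hat c^1,\hat c^2,\dots$ be independent, identically distributed real random variables with mean $c$ and variance $\sigma^2<\infty$. Let $\alpha_0,\alpha_1,\dots$ be deterministic real numbers. Define $\bar v^0=0$ and, for $n\ge1$, $$\hat v^n=\hat c^n+\gamma\bar v^{n-1},\qquad \bar v^n=(1-\alpha_{n-1})\bar v^{n-1}+\alpha_{n-1}\hat v^n.$$ Define $\delta^1=\alpha_0$, $\lambda^1=\alpha_0^2$ and, for $n>1$, $$\delta^n=\alpha_{n-1}+\big(1-(1-\gamma)\alpha_{n-1}\big)\delta^{n-1},\qquad \lambda^n=\alpha_{n-1}^2+\big(1-(1-\gamma)\alpha_{n-1}\big)^2\lambda^{n-1}.$$ Then for all $n\ge1$, $\mathbb{E}(\bar v^n)=\delta^n c$ and $\mathrm{Var}(\bar v^n)=\lambda^n\sigma^2$. *)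

theory Defs
  imports "HOL-Probability.Probability"
begin

text \<open>The iterates. vbar n x is the value of the smoothed estimate after n steps on outcome x;
  chat n is the n-th observation (indices n \<ge> 1 are used), alpha k the k-th step size.\<close>
fun vbar :: "real \<Rightarrow> (nat \<Rightarrow> real) \<Rightarrow> (nat \<Rightarrow> 'a \<Rightarrow> real) \<Rightarrow> nat \<Rightarrow> 'a \<Rightarrow> real" where
  "vbar \<gamma> \<alpha> chat 0 x = 0"
| "vbar \<gamma> \<alpha> chat (Suc n) x =
     (1 - \<alpha> n) * vbar \<gamma> \<alpha> chat n x + \<alpha> n * (chat (Suc n) x + \<gamma> * vbar \<gamma> \<alpha> chat n x)"

definition vhat :: "real \<Rightarrow> (nat \<Rightarrow> real) \<Rightarrow> (nat \<Rightarrow> 'a \<Rightarrow> real) \<Rightarrow> nat \<Rightarrow> 'a \<Rightarrow> real" where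
  "vhat \<gamma> \<alpha> chat n x = chat n x + \<gamma> * vbar \<gamma> \<alpha> chat (n - 1) x"

text \<open>delta and lambda, defined for n \<ge> 1 (value at 0 is an unused default).\<close>
fun delta :: "real \<Rightarrow> (nat \<Rightarrow> real) \<Rightarrow> nat \<Rightarrow> real" where
  "delta \<gamma> \<alpha> 0 = 0"
| "delta \<gamma> \<alpha> (Suc 0) = \<alpha> 0"
| "delta \<gamma> \<alpha> (Suc (Suc n)) = \<alpha> (Suc n) + (1 - (1 - \<gamma>) * \<alpha> (Suc n)) * delta \<gamma> \<alpha> (Suc n)"

fun lambda :: "real \<Rightarrow> (nat \<Rightarrow> real) \<Rightarrow> nat \<Rightarrow> real" where
  "lambda \<gamma> \<alpha> 0 = 0"
| "lambda \<gamma> \<alpha> (Suc 0) = (\<alpha> 0)\<^sup>2"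
| "lambda \<gamma> \<alpha> (Suc (Suc n)) = (\<alpha> (Suc n))\<^sup>2 + (1 - (1 - \<gamma>) * \<alpha> (Suc n))\<^sup>2 * lambda \<gamma> \<alpha> (Suc n)"

end

theory Submission
  imports Defs
begin

text \<open>Writing the update as
  \<open>vbar (n+1) = (1 - (1 - \<gamma>) \<alpha>\<^sub>n) vbar n + \<alpha>\<^sub>n chat (n+1)\<close>,
  the new observation is independent of \<open>vbar n\<close>, which is a function of the earlier
  observations only. Means therefore propagate linearly and variances with squared
  coefficients, which are exactly the recurrences defining \<open>delta\<close> and \<open>lambda\<close>.\<close>

lemma delta_Suc: "delta \<gamma> \<alpha> (Suc n) = \<alpha> n + (1 - (1 - \<gamma>) * \<alpha> n) * delta \<gamma> \<alpha> n"
  by (cases n) simp_all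

lemma lambda_Suc: "lambda \<gamma> \<alpha> (Suc n) = (\<alpha> n)\<^sup>2 + (1 - (1 - \<gamma>) * \<alpha> n)\<^sup>2 * lambda \<gamma> \<alpha> n"
  by (cases n) simp_all

lemma vbar_Suc_affine:
  "vbar \<gamma> \<alpha> chat (Suc n) x = (1 - (1 - \<gamma>) * \<alpha> n) * vbar \<gamma> \<alpha> chat n x + \<alpha> n * chat (Suc n) x"
  by (simp add: algebra_simps)

lemma vbar_cong_prefix:
  assumes "\<forall>i\<in>{1..n}. \<omega> i = chat i x"
  shows "vbar \<gamma> \<alpha> chat n x = vbar \<gamma> \<alpha> (\<lambda>i (_::unit). \<omega> i) n ()"
  using assms by (induction n) auto

lemma vbar_measurable_PiM:
  "m \<le> n \<Longrightarrow>
    (\<lambda>\<omega>. vbar \<gamma> \<alpha> (\<lambda>i (_::unit). \<omega> i) m ()) \<in> borel_measurable (PiM {1..n} (\<lambda>_. borel))"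
proof (induction m)
  case 0
  then show ?case by simp
next
  case (Suc m)
  have "(\<lambda>\<omega>. \<omega> (Suc m)) \<in> borel_measurable (PiM {1..n} (\<lambda>_. (borel::real measure)))"
    using Suc.prems by (intro measurable_component_singleton) auto
  with Suc show ?case by simp
qed

lemma (in prob_space) indep_var_vbar_chat:
  fixes chat :: "nat \<Rightarrow> 'a \<Rightarrow> real"
  assumes "indep_vars (\<lambda>_. borel) chat {1..}"
  shows "indep_var borel (vbar \<gamma> \<alpha> chat n) borel (chat (Suc n))"
proof -
  let ?prefix = "\<lambda>I x. restrict (\<lambda>i. chat i x) I"
  have "indep_var
      borel ((\<lambda>\<omega>. vbar \<gamma> \<alpha> (\<lambda>i (_::unit). \<omega> i) n ()) \<circ> ?prefix {1..n})
      borel ((\<lambda>\<omega>. \<omega> (Suc n)) \<circ> ?prefix {Suc n})"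
    by (intro indep_var_compose[OF indep_var_restrict[OF assms]]
          vbar_measurable_PiM measurable_component_singleton) auto
  also have "(\<lambda>\<omega>. vbar \<gamma> \<alpha> (\<lambda>i (_::unit). \<omega> i) n ()) \<circ> ?prefix {1..n} = vbar \<gamma> \<alpha> chat n"
    by (rule ext, simp, rule vbar_cong_prefix[symmetric]) auto
  also have "(\<lambda>\<omega>. \<omega> (Suc n)) \<circ> ?prefix {Suc n} = chat (Suc n)"
    by auto
  finally show ?thesis .
qed

lemma (in prob_space)
  fixes X Y :: "'a \<Rightarrow> real"
  assumes indep: "indep_var borel X borel Y"
    and X2: "integrable M (\<lambda>x. (X x)\<^sup>2)" and Y2: "integrable M (\<lambda>x. (Y x)\<^sup>2)"
  shows square_integrable_lincomb_indep: "integrable M (\<lambda>x. (a * X x + b * Y x)\<^sup>2)"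
    and variance_lincomb_indep:
      "variance (\<lambda>x. a * X x + b * Y x) = a\<^sup>2 * variance X + b\<^sup>2 * variance Y"
proof -
  have [measurable]: "X \<in> borel_measurable M" "Y \<in> borel_measurable M"
    using indep by (auto dest: indep_var_rv1 indep_var_rv2)
  have X: "integrable M X" and Y: "integrable M Y"
    using X2 Y2 by (auto intro: square_integrable_imp_integrable)
  define mX where "mX = expectation X"
  define mY where "mY = expectation Y"
  have XY: "integrable M (\<lambda>x. X x * Y x)"
    by (rule indep_var_integrable[OF indep X Y])
  have indep_centered: "indep_var borel ((\<lambda>t. t - mX) \<circ> X) borel ((\<lambda>t. t - mY) \<circ> Y)"
    by (rule indep_var_compose[OF indep]) auto
  have cov_integrable: "integrable M (\<lambda>x. (X x - mX) * (Y x - mY))"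
    using indep_var_integrable[OF indep_centered] X Y by (simp add: comp_def)
  have cov_zero: "expectation (\<lambda>x. (X x - mX) * (Y x - mY)) = 0"
    using indep_var_lebesgue_integral[OF indep_centered] X Y
    by (simp add: comp_def prob_space mX_def mY_def)
  have "(\<lambda>x. (a * X x + b * Y x)\<^sup>2) = (\<lambda>x. a\<^sup>2 * (X x)\<^sup>2 + b\<^sup>2 * (Y x)\<^sup>2 + 2 * a * b * (X x * Y x))"
    by (rule ext) (simp add: power2_eq_square algebra_simps)
  then show "integrable M (\<lambda>x. (a * X x + b * Y x)\<^sup>2)"
    using X2 Y2 XY by simp
  have mean: "expectation (\<lambda>x. a * X x + b * Y x) = a * mX + b * mY"
    using X Y by (simp add: mX_def mY_def)
  have "(\<lambda>x. (a * X x + b * Y x - (a * mX + b * mY))\<^sup>2) =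
      (\<lambda>x. a\<^sup>2 * (X x - mX)\<^sup>2 + b\<^sup>2 * (Y x - mY)\<^sup>2 + 2 * a * b * ((X x - mX) * (Y x - mY)))"
    by (rule ext) (simp add: power2_eq_square algebra_simps)
  moreover have "integrable M (\<lambda>x. (X x - mX)\<^sup>2)" "integrable M (\<lambda>x. (Y x - mY)\<^sup>2)"
    using X2 Y2 X Y by (simp_all add: power2_diff)
  ultimately show "variance (\<lambda>x. a * X x + b * Y x) = a\<^sup>2 * variance X + b\<^sup>2 * variance Y"
    unfolding mean using cov_integrable cov_zero by (simp add: mX_def mY_def)
qed

lemma (in prob_space) vbar_moments:
  fixes chat :: "nat \<Rightarrow> 'a \<Rightarrow> real"
  assumes indep: "indep_vars (\<lambda>_. borel) chat {1..}"
    and sq_int: "\<And>n. n \<ge> 1 \<Longrightarrow> integrable M (\<lambda>x. (chat n x)\<^sup>2)"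
    and mean: "\<And>n. n \<ge> 1 \<Longrightarrow> expectation (chat n) = c"
    and var: "\<And>n. n \<ge> 1 \<Longrightarrow> variance (chat n) = \<sigma>\<^sup>2"
  shows "integrable M (\<lambda>x. (vbar \<gamma> \<alpha> chat n x)\<^sup>2)
    \<and> expectation (vbar \<gamma> \<alpha> chat n) = delta \<gamma> \<alpha> n * c
    \<and> variance (vbar \<gamma> \<alpha> chat n) = lambda \<gamma> \<alpha> n * \<sigma>\<^sup>2"
proof (induction n)
  case 0
  then show ?case by simp
next
  case (Suc n)
  let ?V = "vbar \<gamma> \<alpha> chat n" and ?X = "chat (Suc n)"
  let ?a = "1 - (1 - \<gamma>) * \<alpha> n" and ?b = "\<alpha> n"
  have step: "vbar \<gamma> \<alpha> chat (Suc n) = (\<lambda>x. ?a * ?V x + ?b * ?X x)"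
    by (rule ext, rule vbar_Suc_affine)
  have indep_step: "indep_var borel ?V borel ?X"
    by (rule indep_var_vbar_chat[OF indep])
  have [measurable]: "?V \<in> borel_measurable M" "?X \<in> borel_measurable M"
    using indep_step by (auto dest: indep_var_rv1 indep_var_rv2)
  have V2: "integrable M (\<lambda>x. (?V x)\<^sup>2)" and X2: "integrable M (\<lambda>x. (?X x)\<^sup>2)"
    using Suc.IH sq_int by auto
  have "integrable M ?V" "integrable M ?X"
    using V2 X2 by (auto intro: square_integrable_imp_integrable)
  then have "expectation (vbar \<gamma> \<alpha> chat (Suc n)) = delta \<gamma> \<alpha> (Suc n) * c"
    unfolding step using Suc.IH mean by (simp add: delta_Suc algebra_simps)
  moreover have "variance (vbar \<gamma> \<alpha> chat (Suc n)) = lambda \<gamma> \<alpha> (Suc n) * \<sigma>\<^sup>2"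
    unfolding step variance_lincomb_indep[OF indep_step V2 X2] var[of "Suc n", simplified]
      Suc.IH[THEN conjunct2, THEN conjunct2] lambda_Suc
    by (simp add: algebra_simps)
  ultimately show ?case
    using square_integrable_lincomb_indep[OF indep_step V2 X2] unfolding step by blast
qed

theorem proposition1:
  fixes M :: "'a measure" and chat :: "nat \<Rightarrow> 'a \<Rightarrow> real"
    and \<alpha> :: "nat \<Rightarrow> real" and \<gamma> c \<sigma> :: real
  assumes "prob_space M"
    and "0 < \<gamma>" and "\<gamma> < 1"
    and rv: "\<And>n. n \<ge> 1 \<Longrightarrow> chat n \<in> borel_measurable M"
    and indep: "prob_space.indep_vars M (\<lambda>_. borel) chat {1..}"
    and ident: "\<And>n. n \<ge> 1 \<Longrightarrow> distr M borel (chat n) = distr M borel (chat 1)"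
    and sq_int: "\<And>n. n \<ge> 1 \<Longrightarrow> integrable M (\<lambda>x. (chat n x)\<^sup>2)"
    and mean: "\<And>n. n \<ge> 1 \<Longrightarrow> prob_space.expectation M (chat n) = c"
    and var: "\<And>n. n \<ge> 1 \<Longrightarrow> prob_space.variance M (chat n) = \<sigma>\<^sup>2"
  shows "\<forall>n\<ge>1. prob_space.expectation M (vbar \<gamma> \<alpha> chat n) = delta \<gamma> \<alpha> n * c
              \<and> prob_space.variance M (vbar \<gamma> \<alpha> chat n) = lambda \<gamma> \<alpha> n * \<sigma>\<^sup>2"
proof -
  interpret prob_space M by fact
  show ?thesis
    using vbar_moments[OF indep sq_int mean var] by blast
qed

end
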